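(* Let $A$ be an abelian group such that every uniformly fully inert subgroup of $A\oplus A$ is commensurable with some fully invariant subgroup of $A\oplus A$. Then every uniformly fully inert subgroup of $A$ is commensurable with some fully invariant subgroup of $A$.
   Context: All groups are additively written abelian groups. A subgroup $F$ of a group $G$ is fully invariant if $\phi(F)\subseteq F$ for every endomorphism $\phi$ of $G$. A subgroup $S$ of $G$ is uniformly fully inert if there is a fixed positive integer $m$ such that $(\phi(S)+S)/S$ has at most $m$ elements for every endomorphism $\phi$ of $G$. Subgroups $B,C$ of $G$ are commensurable if both $(B+C)/B$ and $(B+C)/C$ are finite. *)

theory Defs
  imports Main "HOL-Library.Product_Plus"
begin

text \<open>Abelian groups are types of class ab_group_add; A (+) A is the product type.\<close>

definition is_subgroup :: "'a::ab_group_add set \<Rightarrow> bool" where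
  "is_subgroup S \<longleftrightarrow> 0 \<in> S \<and> (\<forall>x\<in>S. \<forall>y\<in>S. x + y \<in> S) \<and> (\<forall>x\<in>S. - x \<in> S)"

definition is_endo :: "('a::ab_group_add \<Rightarrow> 'a) \<Rightarrow> bool" where
  "is_endo f \<longleftrightarrow> (\<forall>x y. f (x + y) = f x + f y)"

definition set_sum :: "'a::ab_group_add set \<Rightarrow> 'a set \<Rightarrow> 'a set" where
  "set_sum B C = {b + c | b c. b \<in> B \<and> c \<in> C}"

definition coset :: "'a::ab_group_add \<Rightarrow> 'a set \<Rightarrow> 'a set" where
  "coset x S = (\<lambda>s. x + s) ` S"

definition quot :: "'a::ab_group_add set \<Rightarrow> 'a set \<Rightarrow> 'a set set" where
  "quot T S = {coset x S | x. x \<in> T}"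

definition fully_invariant :: "'a::ab_group_add set \<Rightarrow> bool" where
  "fully_invariant F \<longleftrightarrow> is_subgroup F \<and> (\<forall>f. is_endo f \<longrightarrow> f ` F \<subseteq> F)"

definition uniformly_fully_inert :: "'a::ab_group_add set \<Rightarrow> bool" where
  "uniformly_fully_inert S \<longleftrightarrow> is_subgroup S \<and>
     (\<exists>m::nat. m > 0 \<and> (\<forall>f. is_endo f \<longrightarrow>
        finite (quot (set_sum (f ` S) S) S) \<and> card (quot (set_sum (f ` S) S) S) \<le> m))"

definition commensurable :: "'a::ab_group_add set \<Rightarrow> 'a set \<Rightarrow> bool" where
  "commensurable B C \<longleftrightarrow> finite (quot (set_sum B C) B) \<and> finite (quot (set_sum B C) C)"

end

theory Submission
  imports Defs
begin

text \<open>If \<open>S\<close> is uniformly fully inert in \<open>A\<close>, then so is \<open>S \<times> S\<close> in \<open>A \<oplus> A\<close>: an endomorphism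
  of \<open>A \<oplus> A\<close> is a \<open>2 \<times> 2\<close> matrix of endomorphisms of \<open>A\<close>, and each of its four entries moves
  \<open>S\<close> into at most \<open>m\<close> cosets of \<open>S\<close>, so the whole matrix moves \<open>S \<times> S\<close> into at most \<open>m\<^sup>4\<close>
  cosets of \<open>S \<times> S\<close>. A fully invariant \<open>F\<close> commensurable with \<open>S \<times> S\<close> then yields the fully
  invariant subgroup \<open>{a. (a, 0) \<in> F}\<close> of \<open>A\<close>, and commensurability passes to these sections.\<close>

lemma is_subgroup_diff: "is_subgroup S \<Longrightarrow> a \<in> S \<Longrightarrow> b \<in> S \<Longrightarrow> a - b \<in> S"
  unfolding is_subgroup_def by (metis diff_conv_add_uminus)

lemma is_subgroup_Times: "is_subgroup S \<Longrightarrow> is_subgroup T \<Longrightarrow> is_subgroup (S \<times> T)"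
  unfolding is_subgroup_def by (auto simp: zero_prod_def)

lemma set_sum_memI: "b \<in> B \<Longrightarrow> c \<in> C \<Longrightarrow> b + c \<in> set_sum B C"
  unfolding set_sum_def by blast

lemma mem_coset_iff: "y \<in> coset x S \<longleftrightarrow> y - x \<in> S"
  unfolding coset_def by (auto intro: image_eqI[of _ _ "y - x"])

lemma coset_Pair: "coset (x, y) (S \<times> T) = coset x S \<times> coset y T"
  by (auto simp: mem_coset_iff)

lemma coset_add_subgroup:
  assumes "is_subgroup S" "s \<in> S"
  shows "coset (x + s) S = coset x S"
proof -
  have "y - (x + s) \<in> S \<longleftrightarrow> y - x \<in> S" for y
    using is_subgroup_diff[OF assms(1) _ assms(2), of "y - x"]
      assms unfolding is_subgroup_def by (metis diff_add_cancel diff_diff_eq)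
  then show ?thesis by (auto simp: mem_coset_iff)
qed

lemma coset_add:
  assumes "is_subgroup S"
  shows "coset (a + b) S = set_sum (coset a S) (coset b S)"
proof (intro set_eqI iffI)
  fix y assume "y \<in> coset (a + b) S"
  then have "b + (y - (a + b)) \<in> coset b S" by (simp add: mem_coset_iff algebra_simps)
  moreover have "a \<in> coset a S" using assms by (simp add: mem_coset_iff is_subgroup_def)
  moreover have "y = a + (b + (y - (a + b)))" by simp
  ultimately show "y \<in> set_sum (coset a S) (coset b S)"
    unfolding set_sum_def by blast
next
  fix y assume "y \<in> set_sum (coset a S) (coset b S)"
  then obtain u v where "u - a \<in> S" "v - b \<in> S" "y = u + v"
    unfolding set_sum_def by (auto simp: mem_coset_iff)
  then have "(u - a) + (v - b) \<in> S" using assms unfolding is_subgroup_def by blast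
  moreover have "y - (a + b) = (u - a) + (v - b)" using \<open>y = u + v\<close> by simp
  ultimately show "y \<in> coset (a + b) S" by (metis mem_coset_iff)
qed

lemma quot_set_sum_eq_image:
  assumes "is_subgroup S"
  shows "quot (set_sum X S) S = (\<lambda>x. coset x S) ` X"
proof -
  have "0 \<in> S" using assms unfolding is_subgroup_def by blast
  then have "X \<subseteq> set_sum X S" unfolding set_sum_def by force
  then show ?thesis
    unfolding quot_def set_sum_def by (auto simp: coset_add_subgroup[OF assms])
qed

lemma uniformly_fully_inert_iff_coset_image:
  "uniformly_fully_inert S \<longleftrightarrow> is_subgroup S \<and> (\<exists>m::nat. m > 0 \<and> (\<forall>f. is_endo f \<longrightarrow>
     finite ((\<lambda>x. coset x S) ` f ` S) \<and> card ((\<lambda>x. coset x S) ` f ` S) \<le> m))"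
  unfolding uniformly_fully_inert_def by (auto simp: quot_set_sum_eq_image)

lemma is_endo_matrix_decomposition:
  fixes \<phi> :: "'a::ab_group_add \<times> 'a \<Rightarrow> 'a \<times> 'a"
  assumes "is_endo \<phi>"
  obtains f11 f12 f21 f22 where "is_endo f11" "is_endo f12" "is_endo f21" "is_endo f22"
    and "\<And>x y. \<phi> (x, y) = (f11 x + f12 y, f21 x + f22 y)"
proof
  have hom: "\<phi> (p + q) = \<phi> p + \<phi> q" for p q using assms unfolding is_endo_def by blast
  show "is_endo (\<lambda>x. fst (\<phi> (x, 0)))" "is_endo (\<lambda>y. fst (\<phi> (0, y)))"
       "is_endo (\<lambda>x. snd (\<phi> (x, 0)))" "is_endo (\<lambda>y. snd (\<phi> (0, y)))"
    unfolding is_endo_def using hom[of "(_, 0)" "(_, 0)"] hom[of "(0, _)" "(0, _)"] by simp_all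
  fix x y
  have "\<phi> (x, y) = \<phi> (x, 0) + \<phi> (0, y)" using hom[of "(x, 0)" "(0, y)"] by simp
  then show "\<phi> (x, y) = (fst (\<phi> (x, 0)) + fst (\<phi> (0, y)), snd (\<phi> (x, 0)) + snd (\<phi> (0, y)))"
    by (metis fst_add snd_add prod.collapse)
qed

lemma finite_card_le_mult_if_subset_image_Times:
  assumes "A \<subseteq> h ` (P \<times> Q)" "finite P \<and> card P \<le> m" "finite Q \<and> card Q \<le> n"
  shows "finite A \<and> card A \<le> m * n"
proof
  have "finite (P \<times> Q)" using assms by simp
  then show "finite A" using assms(1) finite_subset by blast
  have "card A \<le> card (h ` (P \<times> Q))"
    using assms(1) \<open>finite (P \<times> Q)\<close> by (simp add: card_mono)
  also have "\<dots> \<le> card (P \<times> Q)" using \<open>finite (P \<times> Q)\<close> by (rule card_image_le)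
  also have "\<dots> \<le> m * n" using assms by (simp add: card_cartesian_product mult_le_mono)
  finally show "card A \<le> m * n" .
qed

lemma coset_image_sum_bound:
  assumes "is_subgroup S"
    and "finite ((\<lambda>x. coset x S) ` f ` S) \<and> card ((\<lambda>x. coset x S) ` f ` S) \<le> m"
    and "finite ((\<lambda>x. coset x S) ` g ` S) \<and> card ((\<lambda>x. coset x S) ` g ` S) \<le> n"
  shows "finite ((\<lambda>x. coset x S) ` (\<lambda>(a, b). f a + g b) ` (S \<times> S)) \<and>
         card ((\<lambda>x. coset x S) ` (\<lambda>(a, b). f a + g b) ` (S \<times> S)) \<le> m * n"
proof (rule finite_card_le_mult_if_subset_image_Times[OF _ assms(2,3)])
  let ?sum = "\<lambda>(c, d). set_sum c d"
  show "(\<lambda>x. coset x S) ` (\<lambda>(a, b). f a + g b) ` (S \<times> S) \<subseteq>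
        ?sum ` ((\<lambda>x. coset x S) ` f ` S \<times> (\<lambda>x. coset x S) ` g ` S)"
  proof
    fix z assume "z \<in> (\<lambda>x. coset x S) ` (\<lambda>(a, b). f a + g b) ` (S \<times> S)"
    then obtain a b where "a \<in> S" "b \<in> S" "z = ?sum (coset (f a) S, coset (g b) S)"
      by (auto simp: coset_add[OF assms(1)])
    moreover have "(coset (f a) S, coset (g b) S) \<in>
        (\<lambda>x. coset x S) ` f ` S \<times> (\<lambda>x. coset x S) ` g ` S"
      using \<open>a \<in> S\<close> \<open>b \<in> S\<close> by auto
    ultimately show "z \<in> ?sum ` ((\<lambda>x. coset x S) ` f ` S \<times> (\<lambda>x. coset x S) ` g ` S)"
      by (simp only: image_eqI)
  qed
qed

lemma uniformly_fully_inert_Times_self: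
  fixes S :: "'a::ab_group_add set"
  assumes "uniformly_fully_inert S"
  shows "uniformly_fully_inert (S \<times> S)"
proof -
  obtain m :: nat where "m > 0" and "is_subgroup S" and bound: "\<And>f. is_endo f \<Longrightarrow>
      finite ((\<lambda>x. coset x S) ` f ` S) \<and> card ((\<lambda>x. coset x S) ` f ` S) \<le> m"
    using assms unfolding uniformly_fully_inert_iff_coset_image by blast
  have "finite ((\<lambda>z. coset z (S \<times> S)) ` \<phi> ` (S \<times> S)) \<and>
        card ((\<lambda>z. coset z (S \<times> S)) ` \<phi> ` (S \<times> S)) \<le> (m * m) * (m * m)"
    if "is_endo \<phi>" for \<phi> :: "'a \<times> 'a \<Rightarrow> 'a \<times> 'a"
  proof -
    obtain f11 f12 f21 f22 where endo: "is_endo f11" "is_endo f12" "is_endo f21" "is_endo f22"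
      and \<phi>: "\<And>x y. \<phi> (x, y) = (f11 x + f12 y, f21 x + f22 y)"
      using is_endo_matrix_decomposition[OF \<open>is_endo \<phi>\<close>] by blast
    let ?row1 = "(\<lambda>x. coset x S) ` (\<lambda>(a, b). f11 a + f12 b) ` (S \<times> S)"
    let ?row2 = "(\<lambda>x. coset x S) ` (\<lambda>(a, b). f21 a + f22 b) ` (S \<times> S)"
    let ?prod = "\<lambda>(c, d). c \<times> d"
    have "(\<lambda>z. coset z (S \<times> S)) ` \<phi> ` (S \<times> S) \<subseteq> ?prod ` (?row1 \<times> ?row2)"
    proof
      fix z assume "z \<in> (\<lambda>z. coset z (S \<times> S)) ` \<phi> ` (S \<times> S)"
      then obtain a b where "a \<in> S" "b \<in> S"
        and "z = ?prod (coset (f11 a + f12 b) S, coset (f21 a + f22 b) S)"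
        by (auto simp: \<phi> coset_Pair)
      moreover have "(coset (f11 a + f12 b) S, coset (f21 a + f22 b) S) \<in> ?row1 \<times> ?row2"
        using \<open>a \<in> S\<close> \<open>b \<in> S\<close> by auto
      ultimately show "z \<in> ?prod ` (?row1 \<times> ?row2)" by (simp only: image_eqI)
    qed
    then show ?thesis
      by (rule finite_card_le_mult_if_subset_image_Times[OF _
            coset_image_sum_bound[OF \<open>is_subgroup S\<close> bound[OF endo(1)] bound[OF endo(2)]]
            coset_image_sum_bound[OF \<open>is_subgroup S\<close> bound[OF endo(3)] bound[OF endo(4)]]])
  qed
  moreover have "(m * m) * (m * m) > 0" using \<open>m > 0\<close> by simp
  ultimately show ?thesis
    unfolding uniformly_fully_inert_iff_coset_image
    using is_subgroup_Times[OF \<open>is_subgroup S\<close> \<open>is_subgroup S\<close>]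
    by (intro conjI exI[of _ "(m * m) * (m * m)"]) auto
qed

definition fst_section :: "('a::ab_group_add \<times> 'b::ab_group_add) set \<Rightarrow> 'a set" where
  "fst_section F = {a. (a, 0) \<in> F}"

lemma fst_section_Times: "0 \<in> T \<Longrightarrow> fst_section (S \<times> T) = S"
  unfolding fst_section_def by auto

lemma fst_section_coset: "fst_section (coset (a, 0) B) = coset a (fst_section B)"
  unfolding fst_section_def by (auto simp: mem_coset_iff)

lemma is_subgroup_fst_section:
  assumes "is_subgroup F"
  shows "is_subgroup (fst_section F)"
proof -
  have "(x, 0) + (y, 0) \<in> F" "- (x, 0) \<in> F" if "(x, 0) \<in> F" "(y, 0) \<in> F" for x y
    using assms that unfolding is_subgroup_def by blast+
  then show ?thesis
    using assms unfolding is_subgroup_def fst_section_def by (simp add: zero_prod_def)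
qed

lemma fully_invariant_fst_section:
  fixes F :: "('a::ab_group_add \<times> 'b::ab_group_add) set"
  assumes "fully_invariant F"
  shows "fully_invariant (fst_section F)"
  unfolding fully_invariant_def
proof (intro conjI allI impI)
  show "is_subgroup (fst_section F)"
    using assms is_subgroup_fst_section unfolding fully_invariant_def by blast
  fix f :: "'a \<Rightarrow> 'a" assume "is_endo f"
  let ?g = "(\<lambda>(x, y). (f x, 0)) :: 'a \<times> 'b \<Rightarrow> 'a \<times> 'b"
  have "is_endo ?g" using \<open>is_endo f\<close> unfolding is_endo_def by simp
  then have "?g ` F \<subseteq> F" using assms unfolding fully_invariant_def by blast
  then show "f ` fst_section F \<subseteq> fst_section F" unfolding fst_section_def by force
qed

lemma quot_fst_section_subset:
  fixes B C E :: "('a::ab_group_add \<times> 'b::ab_group_add) set"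
  shows "quot (set_sum (fst_section B) (fst_section C)) (fst_section E)
     \<subseteq> fst_section ` quot (set_sum B C) E"
proof
  fix D assume "D \<in> quot (set_sum (fst_section B) (fst_section C)) (fst_section E)"
  then obtain b c where "(b, 0) \<in> B" "(c, 0) \<in> C" "D = coset (b + c) (fst_section E)"
    unfolding quot_def set_sum_def fst_section_def by auto
  moreover have "(b + c, 0 :: 'b) = (b, 0) + (c, 0)" by simp
  ultimately have "(b + c, 0) \<in> set_sum B C" "D = fst_section (coset (b + c, 0) E)"
    by (metis set_sum_memI, simp add: fst_section_coset)
  then show "D \<in> fst_section ` quot (set_sum B C) E" unfolding quot_def by blast
qed

lemma commensurable_fst_section:
  "commensurable B C \<Longrightarrow> commensurable (fst_section B) (fst_section C)"
  unfolding commensurable_def using quot_fst_section_subset by (metis finite_imageI finite_subset)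

theorem proposition2p3:
  assumes "\<forall>S :: ('a::ab_group_add \<times> 'a) set. uniformly_fully_inert S \<longrightarrow>
             (\<exists>F. fully_invariant F \<and> commensurable S F)"
  shows "\<forall>S :: 'a set. uniformly_fully_inert S \<longrightarrow>
             (\<exists>F. fully_invariant F \<and> commensurable S F)"
proof (intro allI impI)
  fix S :: "'a set" assume "uniformly_fully_inert S"
  then obtain F where "fully_invariant F" "commensurable (S \<times> S) F"
    using assms uniformly_fully_inert_Times_self by blast
  have "0 \<in> S"
    using \<open>uniformly_fully_inert S\<close> unfolding uniformly_fully_inert_def is_subgroup_def by blast
  then have "commensurable S (fst_section F)"
    using commensurable_fst_section[OF \<open>commensurable (S \<times> S) F\<close>] by (simp add: fst_section_Times)
  moreover have "fully_invariant (fst_section F)"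
    using \<open>fully_invariant F\<close> by (rule fully_invariant_fst_section)
  ultimately show "\<exists>F. fully_invariant F \<and> commensurable S F" by blast
qed

end
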